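(* Consider the behaviorally coupled two-pathogen model described in the context, with spillover constant $s\in[0,1]$, and assume $\mathcal{R}_{0,A}>\mathcal{R}_{0,B}>1$. Let $\bar I_A>0$ be the infectious level of disease $A$ at the disease-$B$-free boundary equilibrium, i.e. the unique positive solution of $e^{k I}=\beta_{0,A}\tau_I-\beta_{0,A}(\tau_I+\tau_R)I$. Suppose that disease $B$ is excluded at this equilibrium in the sense that $$\mathcal{R}_{0,B}<\frac{e^{k\bar I_A}}{e^{k\bar I_A}-s\left(e^{k\bar I_A}-1\right)}.$$ Then $$s> s_{\text{threshold}}:=\frac{1-\frac{1}{\mathcal{R}_{0,B}}}{1-\frac{1}{\mathcal{R}_{0,A}}}.$$
   Context: Model: for $i\in\{A,B\}$ with $j$ denoting the other disease, state variables $S_i,I_i,R_i,\widetilde I_i$ (proportions of the population susceptible, infectious, recovered and "perceived infectious" for disease $i$) satisfy $\dot S_i=-\beta_i S_iI_i+R_i/\tau_R$, $\dot I_i=\beta_iS_iI_i-I_i/\tau_I$, $\dot R_i=I_i/\tau_I-R_i/\tau_R$, $\dot{\widetilde I}_i=(I_i-\widetilde I_i)/\tau_P$, with $S_i+I_i+R_i=1$, where the transmission rate is $\beta_i=\beta_{0,i}\,e^{-k\widetilde I_i}\bigl(1-s(1-e^{-k\widetilde I_j})\bigr)$. All parameters $\beta_{0,A},\beta_{0,B},\tau_I,\tau_R,\tau_P,k$ are positive, and $s\in[0,1]$ is the spillover constant ($s=0$: no spillover, so $\beta_i=\beta_{0,i}e^{-k\widetilde I_i}$; $s=1$: perfect spillover,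 so $\beta_i=\beta_{0,i}e^{-k(\widetilde I_A+\widetilde I_B)}$; $0<s<1$: imperfect spillover). The basic reproduction numbers are $\mathcal{R}_{0,i}=\beta_{0,i}\tau_I$. The disease-$B$-free (disease-$A$ boundary) equilibrium is $(S_A,I_A,R_A,\widetilde I_A,S_B,I_B,R_B,\widetilde I_B)=(1-\bar I_A-\tfrac{\tau_R}{\tau_I}\bar I_A,\ \bar I_A,\ \tfrac{\tau_R}{\tau_I}\bar I_A,\ \bar I_A,\ 1,0,0,0)$. *)

theory Defs
  imports Complex_Main
begin

definition R0 :: "real \<Rightarrow> real \<Rightarrow> real" where
  "R0 beta0 tauI = beta0 * tauI"

definition boundary_level :: "real \<Rightarrow> real \<Rightarrow> real \<Rightarrow> real \<Rightarrow> real \<Rightarrow> bool" where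
  "boundary_level beta0A tauI tauR k I \<longleftrightarrow>
     I > 0 \<and> exp (k * I) = beta0A * tauI - beta0A * (tauI + tauR) * I"

definition s_threshold :: "real \<Rightarrow> real \<Rightarrow> real" where
  "s_threshold R0A R0B = (1 - 1 / R0B) / (1 - 1 / R0A)"

end

theory Submission
  imports Defs
begin

text \<open>Write \<open>E = exp (k * Ibar)\<close>. The boundary equation forces \<open>1 < E < R0\<^sub>A\<close>. Since
  \<open>E - s (E - 1) \<ge> 1\<close>, the exclusion condition is equivalent to \<open>s > s_threshold E R0\<^sub>B\<close>,
  i.e. to the threshold inequality with \<open>E\<close> in place of \<open>R0\<^sub>A\<close>; and \<open>s_threshold\<close> is
  decreasing in its first argument on \<open>(1, \<infinity>)\<close>, so \<open>E < R0\<^sub>A\<close> gives the claim.\<close>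

lemma boundary_level_exp_bounds:
  assumes "beta0A > 0" "tauI > 0" "tauR > 0" "k > 0"
    and "boundary_level beta0A tauI tauR k I"
  shows "1 < exp (k * I)" and "exp (k * I) < R0 beta0A tauI"
proof -
  have I: "I > 0" and eq: "exp (k * I) = R0 beta0A tauI - beta0A * (tauI + tauR) * I"
    using assms(5) by (auto simp: boundary_level_def R0_def)
  show "1 < exp (k * I)"
    using I \<open>k > 0\<close> by simp
  have "beta0A * (tauI + tauR) * I > 0"
    using I assms(1-3) by simp
  then show "exp (k * I) < R0 beta0A tauI"
    using eq by linarith
qed

lemma less_exclusion_bound_iff_s_threshold_less:
  fixes E R s :: real
  assumes "E > 1" "R > 0" "s \<le> 1"
  shows "R < E / (E - s * (E - 1)) \<longleftrightarrow> s_threshold E R < s"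
proof -
  have "s * (E - 1) \<le> E - 1"
    using assms(1,3) by (simp add: mult_left_le_one_le)
  then have "E - s * (E - 1) > 0"
    by linarith
  then have "R < E / (E - s * (E - 1)) \<longleftrightarrow> (R - 1) * E < s * R * (E - 1)"
    by (simp add: pos_less_divide_eq algebra_simps)
  also have "\<dots> \<longleftrightarrow> (R - 1) * E / (R * (E - 1)) < s"
    using assms(1,2) by (simp add: pos_divide_less_eq ac_simps)
  also have "(R - 1) * E / (R * (E - 1)) = s_threshold E R"
    using assms(1,2) by (simp add: s_threshold_def field_simps)
  finally show ?thesis .
qed

lemma s_threshold_antimono:
  fixes E A R :: real
  assumes "1 < E" "E \<le> A" "1 \<le> R"
  shows "s_threshold A R \<le> s_threshold E R"
proof -
  have "0 < 1 - 1 / E" "1 - 1 / E \<le> 1 - 1 / A"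
    using assms(1,2) by (simp_all add: frac_le)
  moreover have "0 \<le> 1 - 1 / R"
    using assms(3) by simp
  ultimately show ?thesis
    unfolding s_threshold_def by (intro divide_left_mono mult_pos_pos) auto
qed

theorem theorem1:
  fixes beta0A beta0B tauI tauR tauP k s Ibar :: real
  assumes "beta0A > 0" "beta0B > 0" "tauI > 0" "tauR > 0" "tauP > 0" "k > 0"
    and "0 \<le> s" "s \<le> 1"
    and "R0 beta0A tauI > R0 beta0B tauI" "R0 beta0B tauI > 1"
    and "boundary_level beta0A tauI tauR k Ibar"
    and "R0 beta0B tauI < exp (k * Ibar) / (exp (k * Ibar) - s * (exp (k * Ibar) - 1))"
  shows "s > s_threshold (R0 beta0A tauI) (R0 beta0B tauI)"
proof -
  have E_gt_1: "1 < exp (k * Ibar)" and E_less: "exp (k * Ibar) < R0 beta0A tauI"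
    using boundary_level_exp_bounds assms(1,3,4,6,11) by blast+
  have "s_threshold (R0 beta0A tauI) (R0 beta0B tauI) \<le> s_threshold (exp (k * Ibar)) (R0 beta0B tauI)"
    using s_threshold_antimono E_gt_1 E_less assms(10) by simp
  also have "\<dots> < s"
    using less_exclusion_bound_iff_s_threshold_less E_gt_1 assms(8,10,12) by simp
  finally show ?thesis .
qed

end
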